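(* Let $M$ be a smooth manifold with a symmetric affine connection $\nabla$, Riemann tensor $R_{abc}{}^d$ and Ricci tensor $R_{ab}$. Then $$\nabla_a\nabla_m R_{bce}{}^m + \nabla_{b}\nabla_m R_{cae}{}^m+\nabla_c\nabla_m R_{abe}{}^m = R_{am}R_{bce}{}^m + R_{bm}R_{cae}{}^m + R_{cm}R_{abe}{}^m .$$
   Context: Abstract index notation with Einstein summation. The connection has symmetric Christoffel symbols $\Gamma^c_{ab}$; $R_{abc}{}^d = \partial_a \Gamma_{bc}^d - \partial_b\Gamma_{ac}^d - \Gamma_{ac}^k\Gamma_{bk}^d + \Gamma_{ak}^d \Gamma_{bc}^k$ and $R_{ac}=R_{abc}{}^b$. *)

theory Defs
  imports "HOL-Analysis.Analysis"
begin

text \<open>Local coordinate description on an open set U of R^n (index type 'n).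
  Christoffel symbols: Gam a b c x = Gamma^c_{ab}(x).
  Tensor fields: T lo up x, lo = list of lower indices, up = list of upper indices.\<close>

definition pd :: "'n::finite \<Rightarrow> (real^'n \<Rightarrow> real) \<Rightarrow> real^'n \<Rightarrow> real" where
  "pd i f x = frechet_derivative f (at x) (axis i 1)"

fun iter_pd :: "'n::finite list \<Rightarrow> (real^'n \<Rightarrow> real) \<Rightarrow> real^'n \<Rightarrow> real" where
  "iter_pd [] f = f"
| "iter_pd (i # is) f = pd i (iter_pd is f)"

definition smooth_on :: "(real^'n::finite) set \<Rightarrow> (real^'n \<Rightarrow> real) \<Rightarrow> bool" where
  "smooth_on U f \<longleftrightarrow> (\<forall>is. \<forall>x\<in>U. iter_pd is f differentiable (at x))"

definition nabla :: "('n::finite \<Rightarrow> 'n \<Rightarrow> 'n \<Rightarrow> real^'n \<Rightarrow> real)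
    \<Rightarrow> ('n list \<Rightarrow> 'n list \<Rightarrow> real^'n \<Rightarrow> real)
    \<Rightarrow> 'n list \<Rightarrow> 'n list \<Rightarrow> real^'n \<Rightarrow> real" where
  "nabla Gam T lo up x = (case lo of [] \<Rightarrow> 0 | a # bs \<Rightarrow>
      pd a (T bs up) x
      - (\<Sum>i<length bs. \<Sum>k\<in>UNIV. Gam a (bs ! i) k x * T (bs[i := k]) up x)
      + (\<Sum>j<length up. \<Sum>k\<in>UNIV. Gam a k (up ! j) x * T bs (up[j := k]) x))"

definition riem :: "('n::finite \<Rightarrow> 'n \<Rightarrow> 'n \<Rightarrow> real^'n \<Rightarrow> real)
    \<Rightarrow> 'n \<Rightarrow> 'n \<Rightarrow> 'n \<Rightarrow> 'n \<Rightarrow> real^'n \<Rightarrow> real" where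
  "riem Gam a b c d x = pd a (Gam b c d) x - pd b (Gam a c d) x
      - (\<Sum>k\<in>UNIV. Gam a c k x * Gam b k d x)
      + (\<Sum>k\<in>UNIV. Gam a k d x * Gam b c k x)"

definition ricci :: "('n::finite \<Rightarrow> 'n \<Rightarrow> 'n \<Rightarrow> real^'n \<Rightarrow> real)
    \<Rightarrow> 'n \<Rightarrow> 'n \<Rightarrow> real^'n \<Rightarrow> real" where
  "ricci Gam a c x = (\<Sum>b\<in>UNIV. riem Gam a b c b x)"

definition riemT :: "('n::finite \<Rightarrow> 'n \<Rightarrow> 'n \<Rightarrow> real^'n \<Rightarrow> real)
    \<Rightarrow> 'n list \<Rightarrow> 'n list \<Rightarrow> real^'n \<Rightarrow> real" where
  "riemT Gam lo up x = riem Gam (lo ! 0) (lo ! 1) (lo ! 2) (up ! 0) x"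

definition divR :: "('n::finite \<Rightarrow> 'n \<Rightarrow> 'n \<Rightarrow> real^'n \<Rightarrow> real)
    \<Rightarrow> 'n list \<Rightarrow> 'n list \<Rightarrow> real^'n \<Rightarrow> real" where
  "divR Gam lo up x = (\<Sum>m\<in>UNIV. nabla Gam (riemT Gam) (m # lo) [m] x)"

end

theory Submission
  imports Defs
begin

text \<open>
  The contracted second Bianchi identity gives
        nabla_m R_{bce}^m = nabla_c R_{be} - nabla_b R_{ce},
      so the left-hand side of the theorem is a cyclic sum of commutators
      [nabla_a, nabla_c] R_{be}; the Ricci identity together with the first Bianchi
      identity turns it into the right-hand side.
\<close>

section \<open>Partial derivatives\<close>

lemma pd_eq_derivative: "(f has_derivative f') (at y) \<Longrightarrow> pd i f y = f' (axis i 1)"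
  unfolding pd_def using frechet_derivative_at by metis

lemma has_frechet_derivative: "f differentiable (at y) \<Longrightarrow> (f has_derivative frechet_derivative f (at y)) (at y)"
  using frechet_derivative_works by blast

lemma pd_add: "f differentiable (at y) \<Longrightarrow> g differentiable (at y) \<Longrightarrow>
    pd i (\<lambda>z. f z + g z) y = pd i f y + pd i g y"
  by (subst pd_eq_derivative[OF has_derivative_add[OF has_frechet_derivative has_frechet_derivative]],
      assumption+) (simp add: pd_def)

lemma pd_diff: "f differentiable (at y) \<Longrightarrow> g differentiable (at y) \<Longrightarrow>
    pd i (\<lambda>z. f z - g z) y = pd i f y - pd i g y"
  by (subst pd_eq_derivative[OF has_derivative_diff[OF has_frechet_derivative has_frechet_derivative]],
      assumption+) (simp add: pd_def)

lemma pd_mult: "f differentiable (at y) \<Longrightarrow> g differentiable (at y) \<Longrightarrow>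
    pd i (\<lambda>z. f z * g z) y = f y * pd i g y + pd i f y * g y"
  by (subst pd_eq_derivative[OF has_derivative_mult[OF has_frechet_derivative has_frechet_derivative]],
      assumption+) (simp add: pd_def)

lemma pd_sum: "finite A \<Longrightarrow> (\<And>k. k \<in> A \<Longrightarrow> F k differentiable (at y)) \<Longrightarrow>
    pd i (\<lambda>z. \<Sum>k\<in>A. F k z) y = (\<Sum>k\<in>A. pd i (F k) y)"
  by (subst pd_eq_derivative[OF has_derivative_sum[OF has_frechet_derivative]], assumption+)
    (simp add: pd_def)

lemma pd_sum_UNIV: "(\<And>k. F k differentiable (at y)) \<Longrightarrow>
    pd i (\<lambda>z. \<Sum>k\<in>(UNIV::'m::finite set). F k z) y = (\<Sum>k\<in>UNIV. pd i (F k) y)"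
  by (rule pd_sum) auto

lemma pd_const: "pd i (\<lambda>z. c) = (\<lambda>z. 0)"
  by (rule ext) (simp add: pd_def)

lemma pd_local:
  assumes "open U" "y \<in> U" "\<And>z. z \<in> U \<Longrightarrow> f z = g z"
  shows "pd i f y = pd i g y"
proof -
  have "(f has_derivative f') (at y) = (g has_derivative f') (at y)" for f'
    using has_derivative_transform_within_open[OF _ assms(1,2), of f f' UNIV g]
      has_derivative_transform_within_open[OF _ assms(1,2), of g f' UNIV f] assms(3)
    by auto
  then show ?thesis unfolding pd_def frechet_derivative_def by simp
qed

lemma differentiable_local:
  assumes "open U" "y \<in> U" "\<And>z. z \<in> U \<Longrightarrow> f z = g z" "f differentiable (at y)"
  shows "g differentiable (at y)"
  using has_derivative_transform_within_open[OF has_frechet_derivative[OF assms(4)] assms(1,2), of g] assms(3)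
  by (auto intro: differentiableI)

lemma pd_line_derivative:
  assumes "g differentiable (at (p + s *\<^sub>R axis i 1))"
  shows "((\<lambda>s. g (p + s *\<^sub>R axis i 1)) has_real_derivative pd i g (p + s *\<^sub>R axis i 1)) (at s)"
proof -
  let ?y = "p + s *\<^sub>R axis i 1" and ?D = "frechet_derivative g (at (p + s *\<^sub>R axis i 1))"
  have line: "((\<lambda>s. p + s *\<^sub>R axis i 1) has_derivative (\<lambda>h. h *\<^sub>R axis i 1)) (at s)"
    by (auto intro!: derivative_eq_intros)
  have "((\<lambda>s. g (p + s *\<^sub>R axis i 1)) has_derivative (\<lambda>h. ?D (h *\<^sub>R axis i 1))) (at s)"
    by (rule has_derivative_compose[OF line has_frechet_derivative[OF assms]])
  moreover have "(\<lambda>h. ?D (h *\<^sub>R axis i 1)) = (*) (pd i g ?y)"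
    using linear_cmul[OF linear_frechet_derivative[OF assms]] by (auto simp: fun_eq_iff pd_def)
  ultimately show ?thesis unfolding has_field_derivative_def by simp
qed

section \<open>Symmetry of mixed partial derivatives\<close>

text \<open>Two applications of the mean value theorem express the second difference of f
  over a coordinate rectangle through a mixed partial derivative at an interior point.\<close>
lemma mixed_difference_mvt:
  fixes f :: "real^'n::finite \<Rightarrow> real"
  assumes h: "0 < h"
    and box: "\<And>s t. 0 \<le> s \<Longrightarrow> s \<le> h \<Longrightarrow> 0 \<le> t \<Longrightarrow> t \<le> h \<Longrightarrow>
                z + s *\<^sub>R axis i 1 + t *\<^sub>R axis j 1 \<in> U"
    and f: "\<And>y. y \<in> U \<Longrightarrow> f differentiable (at y)"
    and df: "\<And>y. y \<in> U \<Longrightarrow> pd i f differentiable (at y)"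
  shows "\<exists>s t. 0 < s \<and> s < h \<and> 0 < t \<and> t < h \<and>
    f (z + h *\<^sub>R axis i 1 + h *\<^sub>R axis j 1) - f (z + h *\<^sub>R axis i 1) - f (z + h *\<^sub>R axis j 1) + f z
      = h * h * pd j (pd i f) (z + s *\<^sub>R axis i 1 + t *\<^sub>R axis j 1)"
proof -
  define u v where "u = (axis i 1 :: real^'n)" and "v = (axis j 1 :: real^'n)"
  define P where "P s t = z + s *\<^sub>R u + t *\<^sub>R v" for s t
  have P_u: "P s t = (z + t *\<^sub>R v) + s *\<^sub>R u" and P_v: "P s t = (z + s *\<^sub>R u) + t *\<^sub>R v" for s t
    by (simp_all add: P_def algebra_simps)
  have in_U: "P s t \<in> U" if "0 \<le> s" "s \<le> h" "0 \<le> t" "t \<le> h" for s t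
    using box[OF that] by (simp add: P_def u_def v_def)
  have deriv_u: "DERIV (\<lambda>s. g (P s t)) s :> pd i g (P s t)" if "g differentiable (at (P s t))" for g s t
    using pd_line_derivative[of g "z + t *\<^sub>R v" s i] that by (simp add: P_u u_def)
  have deriv_v: "DERIV (\<lambda>t. g (P s t)) t :> pd j g (P s t)" if "g differentiable (at (P s t))" for g s t
    using pd_line_derivative[of g "z + s *\<^sub>R u" t j] that by (simp add: P_v v_def)
  have "DERIV (\<lambda>s. f (P s h) - f (P s 0)) s :> pd i f (P s h) - pd i f (P s 0)"
    if "0 \<le> s" "s \<le> h" for s
    using that h by (intro DERIV_diff deriv_u f in_U) auto
  from MVT2[OF h this] obtain \<sigma> where \<sigma>: "0 < \<sigma>" "\<sigma> < h"
    and step1: "f (P h h) - f (P h 0) - (f (P 0 h) - f (P 0 0)) = h * (pd i f (P \<sigma> h) - pd i f (P \<sigma> 0))"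
    by auto
  have "DERIV (\<lambda>t. pd i f (P \<sigma> t)) t :> pd j (pd i f) (P \<sigma> t)" if "0 \<le> t" "t \<le> h" for t
    using that \<sigma> by (intro deriv_v df in_U) auto
  from MVT2[OF h this] obtain \<tau> where \<tau>: "0 < \<tau>" "\<tau> < h"
    and step2: "pd i f (P \<sigma> h) - pd i f (P \<sigma> 0) = h * pd j (pd i f) (P \<sigma> \<tau>)"
    by auto
  have "f (P h h) - f (P h 0) - f (P 0 h) + f (P 0 0) = h * h * pd j (pd i f) (P \<sigma> \<tau>)"
    using step1 step2 by (simp add: algebra_simps)
  with \<sigma> \<tau> show ?thesis by (auto simp: P_def u_def v_def)
qed

lemma coordinate_square_dist:
  fixes z :: "real^'n::finite"
  assumes "0 \<le> s" "s \<le> h" "0 \<le> t" "t \<le> h"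
  shows "dist (z + s *\<^sub>R axis k 1 + t *\<^sub>R axis l 1) z \<le> 2 * h"
proof -
  have "dist (z + s *\<^sub>R axis k 1 + t *\<^sub>R axis l 1) z = norm (s *\<^sub>R axis k 1 + t *\<^sub>R (axis l 1 :: real^'n))"
    by (simp add: dist_norm)
  also have "\<dots> \<le> s + t"
    using norm_triangle_ineq[of "s *\<^sub>R axis k 1" "t *\<^sub>R (axis l 1 :: real^'n)"] assms by simp
  finally show ?thesis using assms by simp
qed

lemma pd_commute:
  fixes f :: "real^'n::finite \<Rightarrow> real"
  assumes U: "open U" "z \<in> U"
    and f: "\<And>y. y \<in> U \<Longrightarrow> f differentiable (at y)"
    and df: "\<And>k y. y \<in> U \<Longrightarrow> pd k f differentiable (at y)"
    and cont_ij: "continuous (at z) (pd i (pd j f))"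
    and cont_ji: "continuous (at z) (pd j (pd i f))"
  shows "pd i (pd j f) z = pd j (pd i f) z"
proof (rule ccontr)
  define A B where "A = pd j (pd i f) z" and "B = pd i (pd j f) z"
  define d where "d = \<bar>A - B\<bar> / 2"
  assume "pd i (pd j f) z \<noteq> pd j (pd i f) z"
  then have "0 < d" by (simp add: d_def A_def B_def)
  obtain e1 where e1: "0 < e1" "\<And>y. dist y z < e1 \<Longrightarrow> dist (pd j (pd i f) y) A < d"
    using cont_ji \<open>0 < d\<close> unfolding continuous_at_eps_delta A_def by blast
  obtain e2 where e2: "0 < e2" "\<And>y. dist y z < e2 \<Longrightarrow> dist (pd i (pd j f) y) B < d"
    using cont_ij \<open>0 < d\<close> unfolding continuous_at_eps_delta B_def by blast
  obtain r where r: "0 < r" "ball z r \<subseteq> U" using U open_contains_ball by blast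
  define h where "h = min r (min e1 e2) / 4"
  have h: "0 < h" "2 * h < r" "2 * h < e1" "2 * h < e2" using r e1 e2 by (auto simp: h_def)
  have box: "z + s *\<^sub>R axis k 1 + t *\<^sub>R axis l 1 \<in> U"
    if "0 \<le> s" "s \<le> h" "0 \<le> t" "t \<le> h" for k l s t
    using coordinate_square_dist[OF that, of z k l] h r by (auto simp: dist_commute)
  obtain s1 t1 where st1: "0 < s1" "s1 < h" "0 < t1" "t1 < h" and \<Delta>1:
    "f (z + h *\<^sub>R axis i 1 + h *\<^sub>R axis j 1) - f (z + h *\<^sub>R axis i 1) - f (z + h *\<^sub>R axis j 1) + f z
      = h * h * pd j (pd i f) (z + s1 *\<^sub>R axis i 1 + t1 *\<^sub>R axis j 1)"
    using mixed_difference_mvt[OF h(1) box f df] by blast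
  obtain s2 t2 where st2: "0 < s2" "s2 < h" "0 < t2" "t2 < h" and \<Delta>2:
    "f (z + h *\<^sub>R axis j 1 + h *\<^sub>R axis i 1) - f (z + h *\<^sub>R axis j 1) - f (z + h *\<^sub>R axis i 1) + f z
      = h * h * pd i (pd j f) (z + s2 *\<^sub>R axis j 1 + t2 *\<^sub>R axis i 1)"
    using mixed_difference_mvt[OF h(1) box f df] by blast
  have same: "pd j (pd i f) (z + s1 *\<^sub>R axis i 1 + t1 *\<^sub>R axis j 1)
      = pd i (pd j f) (z + s2 *\<^sub>R axis j 1 + t2 *\<^sub>R axis i 1)"
  proof -
    have "f (z + h *\<^sub>R axis j 1 + h *\<^sub>R axis i 1) = f (z + h *\<^sub>R axis i 1 + h *\<^sub>R axis j 1)"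
      by (simp add: add_ac)
    then have "h * h * pd j (pd i f) (z + s1 *\<^sub>R axis i 1 + t1 *\<^sub>R axis j 1)
        = h * h * pd i (pd j f) (z + s2 *\<^sub>R axis j 1 + t2 *\<^sub>R axis i 1)"
      using \<Delta>1 \<Delta>2 by linarith
    then show ?thesis using h(1) by simp
  qed
  have "dist (pd j (pd i f) (z + s1 *\<^sub>R axis i 1 + t1 *\<^sub>R axis j 1)) A < d"
    using e1(2) coordinate_square_dist[of s1 h t1 z i j] st1 h by force
  moreover have "dist (pd i (pd j f) (z + s2 *\<^sub>R axis j 1 + t2 *\<^sub>R axis i 1)) B < d"
    using e2(2) coordinate_square_dist[of s2 h t2 z j i] st2 h by force
  ultimately have "\<bar>A - B\<bar> < 2 * d" using same unfolding dist_real_def by linarith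
  then show False by (simp add: d_def)
qed

section \<open>Smooth functions\<close>

text \<open>The predicate diff_upto U n f says that f and all its iterated partial derivatives of order at
  most n are differentiable on U.  Smoothness is this for every n; the recursion on n
  makes the closure properties of smooth functions provable by induction.\<close>
fun diff_upto :: "(real^'n::finite) set \<Rightarrow> nat \<Rightarrow> (real^'n \<Rightarrow> real) \<Rightarrow> bool" where
  "diff_upto U 0 f \<longleftrightarrow> (\<forall>z\<in>U. f differentiable (at z))"
| "diff_upto U (Suc n) f \<longleftrightarrow> (\<forall>z\<in>U. f differentiable (at z)) \<and> (\<forall>i. diff_upto U n (pd i f))"

lemma iter_pd_append: "iter_pd (xs @ ys) f = iter_pd xs (iter_pd ys f)"
  by (induction xs) auto

lemma diff_upto_iff:
  "diff_upto U n f \<longleftrightarrow> (\<forall>is. length is \<le> n \<longrightarrow> (\<forall>z\<in>U. iter_pd is f differentiable (at z)))"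
proof (induction n arbitrary: f)
  case 0
  then show ?case by auto
next
  case (Suc n)
  have "(\<forall>is. length is \<le> Suc n \<longrightarrow> (\<forall>z\<in>U. iter_pd is f differentiable (at z)))
     \<longleftrightarrow> (\<forall>z\<in>U. f differentiable (at z))
       \<and> (\<forall>i is. length is \<le> n \<longrightarrow> (\<forall>z\<in>U. iter_pd (is @ [i]) f differentiable (at z)))"
    (is "?all \<longleftrightarrow> ?split")
  proof
    assume ?all
    then show ?split by (metis iter_pd.simps(1) le0 length_append_singleton list.size(3) not_less_eq_eq)
  next
    assume ?split
    show ?all
    proof (intro allI impI)
      fix "is" :: "'a list" assume "length is \<le> Suc n"
      with \<open>?split\<close> show "\<forall>z\<in>U. iter_pd is f differentiable (at z)"
        by (cases "is" rule: rev_cases) auto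
    qed
  qed
  then show ?case using Suc.IH by (simp add: iter_pd_append)
qed

lemma smooth_on_iff_diff_upto: "smooth_on U f \<longleftrightarrow> (\<forall>n. diff_upto U n f)"
  unfolding smooth_on_def diff_upto_iff by blast

lemma diff_upto_Suc_imp: "diff_upto U (Suc n) f \<Longrightarrow> diff_upto U n f"
  by (induction n arbitrary: f) auto

lemma diff_upto_differentiable: "diff_upto U n f \<Longrightarrow> z \<in> U \<Longrightarrow> f differentiable (at z)"
  by (cases n) auto

lemma diff_upto_local:
  "open U \<Longrightarrow> diff_upto U n f \<Longrightarrow> (\<And>z. z \<in> U \<Longrightarrow> f z = g z) \<Longrightarrow> diff_upto U n g"
proof (induction n arbitrary: f g)
  case 0
  then show ?case using differentiable_local[of U _ f g] by simp
next
  case (Suc n)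
  have "diff_upto U n (pd i g)" for i
    using Suc.IH[of "pd i f" "pd i g"] Suc.prems pd_local[of U _ f g i] by simp
  then show ?case using Suc.prems differentiable_local[of U _ f g] by simp
qed

lemma diff_upto_const: "diff_upto U n (\<lambda>z. c)"
  by (induction n arbitrary: c) (simp_all add: pd_const)

lemma diff_upto_add:
  "open U \<Longrightarrow> diff_upto U n f \<Longrightarrow> diff_upto U n g \<Longrightarrow> diff_upto U n (\<lambda>z. f z + g z)"
proof (induction n arbitrary: f g)
  case 0
  then show ?case by auto
next
  case (Suc n)
  have "diff_upto U n (pd i (\<lambda>z. f z + g z))" for i
  proof (rule diff_upto_local[OF \<open>open U\<close>])
    show "diff_upto U n (\<lambda>z. pd i f z + pd i g z)"
      using Suc.prems by (intro Suc.IH) auto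
    show "pd i f z + pd i g z = pd i (\<lambda>z. f z + g z) z" if "z \<in> U" for z
      using pd_add[of f z g i] Suc.prems that by (auto intro: diff_upto_differentiable)
  qed
  then show ?case using Suc.prems by auto
qed

lemma diff_upto_mult:
  "open U \<Longrightarrow> diff_upto U n f \<Longrightarrow> diff_upto U n g \<Longrightarrow> diff_upto U n (\<lambda>z. f z * g z)"
proof (induction n arbitrary: f g)
  case 0
  then show ?case by auto
next
  case (Suc n)
  have "diff_upto U n (pd i (\<lambda>z. f z * g z))" for i
  proof (rule diff_upto_local[OF \<open>open U\<close>])
    have "diff_upto U n f" "diff_upto U n g" using Suc.prems diff_upto_Suc_imp by blast+
    then show "diff_upto U n (\<lambda>z. f z * pd i g z + pd i f z * g z)"
      using Suc.prems by (intro diff_upto_add Suc.IH) auto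
    show "f z * pd i g z + pd i f z * g z = pd i (\<lambda>z. f z * g z) z" if "z \<in> U" for z
      using pd_mult[of f z g i] Suc.prems that by (auto intro: diff_upto_differentiable)
  qed
  then show ?case using Suc.prems by auto
qed

lemma smooth_on_add: "open U \<Longrightarrow> smooth_on U f \<Longrightarrow> smooth_on U g \<Longrightarrow> smooth_on U (\<lambda>z. f z + g z)"
  by (simp add: smooth_on_iff_diff_upto diff_upto_add)

lemma smooth_on_mult: "open U \<Longrightarrow> smooth_on U f \<Longrightarrow> smooth_on U g \<Longrightarrow> smooth_on U (\<lambda>z. f z * g z)"
  by (simp add: smooth_on_iff_diff_upto diff_upto_mult)

lemma smooth_on_const: "smooth_on U (\<lambda>z. c)"
  by (simp add: smooth_on_iff_diff_upto diff_upto_const)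

lemma smooth_on_diff:
  assumes "open U" "smooth_on U f" "smooth_on U g"
  shows "smooth_on U (\<lambda>z. f z - g z)"
proof -
  have "smooth_on U (\<lambda>z. f z + (-1) * g z)"
    using assms by (intro smooth_on_add smooth_on_mult smooth_on_const)
  then show ?thesis by simp
qed

lemma smooth_on_sum:
  assumes "open U" "finite A" "\<And>k. k \<in> A \<Longrightarrow> smooth_on U (F k)"
  shows "smooth_on U (\<lambda>z. \<Sum>k\<in>A. F k z)"
  using assms(2,3)
  by (induction A rule: finite_induct) (simp_all add: smooth_on_const smooth_on_add[OF assms(1)])

lemma smooth_on_pd: "smooth_on U f \<Longrightarrow> smooth_on U (pd i f)"
  unfolding smooth_on_def using iter_pd_append[of _ "[i]" f] by (metis iter_pd.simps)

lemma smooth_on_differentiable: "smooth_on U f \<Longrightarrow> y \<in> U \<Longrightarrow> f differentiable (at y)"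
  unfolding smooth_on_def by (metis iter_pd.simps(1))

lemma smooth_on_pd_commute:
  assumes "open U" "smooth_on U f" "y \<in> U"
  shows "pd i (pd j f) y = pd j (pd i f) y"
  using assms by (intro pd_commute differentiable_imp_continuous_within
      smooth_on_differentiable smooth_on_pd) auto

section \<open>Curvature identities at a point\<close>

text \<open>At a fixed point, g a b c stands for Gamma^c_{ab}, p i a b c for its partial
  derivative d_i Gamma^c_{ab}, and q i j a b c for d_i d_j Gamma^c_{ab}.  All curvature
  expressions below are polynomials in these arrays, so the classical identities become
  finite-sum identities that only use the symmetries of a torsion-free connection.\<close>

type_synonym 'n arr2 = "'n \<Rightarrow> 'n \<Rightarrow> real"
type_synonym 'n arr3 = "'n \<Rightarrow> 'n \<Rightarrow> 'n \<Rightarrow> real"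
type_synonym 'n arr4 = "'n \<Rightarrow> 'n \<Rightarrow> 'n \<Rightarrow> 'n \<Rightarrow> real"
type_synonym 'n arr5 = "'n \<Rightarrow> 'n \<Rightarrow> 'n \<Rightarrow> 'n \<Rightarrow> 'n \<Rightarrow> real"

definition riem_at :: "'n::finite arr3 \<Rightarrow> 'n arr4 \<Rightarrow> 'n arr4" where
  "riem_at g p a b c d = p a b c d - p b a c d
     - (\<Sum>k\<in>UNIV. g a c k * g b k d) + (\<Sum>k\<in>UNIV. g a k d * g b c k)"

text \<open>Partial derivative d_e R_{abc}^d, by the product rule.\<close>
definition driem_at :: "'n::finite arr3 \<Rightarrow> 'n arr4 \<Rightarrow> 'n arr5 \<Rightarrow> 'n arr5" where
  "driem_at g p q e a b c d = q e a b c d - q e b a c d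
     - (\<Sum>k\<in>UNIV. g a c k * p e b k d + p e a c k * g b k d)
     + (\<Sum>k\<in>UNIV. g a k d * p e b c k + p e a k d * g b c k)"

text \<open>Covariant derivative nabla_a R_{bce}^d.\<close>
definition nriem_at :: "'n::finite arr3 \<Rightarrow> 'n arr4 \<Rightarrow> 'n arr5 \<Rightarrow> 'n arr5" where
  "nriem_at g p q a b c e d = driem_at g p q a b c e d
     - (\<Sum>k\<in>UNIV. g a b k * riem_at g p k c e d) - (\<Sum>k\<in>UNIV. g a c k * riem_at g p b k e d)
     - (\<Sum>k\<in>UNIV. g a e k * riem_at g p b c k d) + (\<Sum>k\<in>UNIV. g a k d * riem_at g p b c e k)"

text \<open>Covariant derivative nabla_c R_{be} of the Ricci tensor R_{be} = R_{bme}^m.\<close>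
definition nricci_at :: "'n::finite arr3 \<Rightarrow> 'n arr4 \<Rightarrow> 'n arr5 \<Rightarrow> 'n arr3" where
  "nricci_at g p q c b e = (\<Sum>m\<in>UNIV. driem_at g p q c b m e m)
     - (\<Sum>k\<in>UNIV. g c b k * (\<Sum>m\<in>UNIV. riem_at g p k m e m))
     - (\<Sum>k\<in>UNIV. g c e k * (\<Sum>m\<in>UNIV. riem_at g p b m k m))"

text \<open>A double sum equals its symmetrisation; this is how the quadratic Christoffel
  terms, which cancel only after exchanging the summation indices, are matched.\<close>
lemma sum_symmetrise:
  "(\<Sum>k\<in>A. \<Sum>n\<in>A. f k n) = (\<Sum>k\<in>A. \<Sum>n\<in>A. (f k n + f n k) / (2::real))"
proof -
  have "(\<Sum>k\<in>A. \<Sum>n\<in>A. (f k n + f n k) / 2) = ((\<Sum>k\<in>A. \<Sum>n\<in>A. f k n) + (\<Sum>k\<in>A. \<Sum>n\<in>A. f n k)) / 2"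
    by (simp only: add_divide_distrib sum.distrib sum_divide_distrib)
  also have "(\<Sum>k\<in>A. \<Sum>n\<in>A. f n k) = (\<Sum>k\<in>A. \<Sum>n\<in>A. f k n)"
    by (rule sum.swap)
  finally show ?thesis by simp
qed

lemma riem_at_bianchi1:
  fixes g :: "'n::finite arr3"
  assumes "\<And>a b c. g a b c = g b a c"
    and "\<And>i a b c. p i a b c = p i b a c"
  shows "riem_at g p a b c d + riem_at g p b c a d + riem_at g p c a b d = 0"
  using assms
  by (simp add: riem_at_def sum_distrib_left sum.distrib sum_subtractf algebra_simps)

lemma nriem_at_antisym:
  fixes g :: "'n::finite arr3"
  assumes "\<And>a b c. g a b c = g b a c"
  shows "nriem_at g p q a b c e d = - nriem_at g p q a c b e d"
  using assms
  by (simp add: nriem_at_def driem_at_def riem_at_def sum_distrib_left sum.distrib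
      sum_subtractf algebra_simps)

lemma nriem_at_bianchi2:
  fixes g :: "'n::finite arr3"
  assumes gs: "\<And>a b c. g a b c = g b a c"
    and ps: "\<And>i a b c. p i a b c = p i b a c"
    and qs: "\<And>i j a b c. q i j a b c = q j i a b c"
    and qs': "\<And>i j a b c. q i j a b c = q i j b a c"
  shows "nriem_at g p q a b c e d + nriem_at g p q b c a e d + nriem_at g p q c a b e d = 0"
  apply (simp add: nriem_at_def driem_at_def riem_at_def sum_distrib_left sum.distrib
      sum_subtractf algebra_simps)
  apply (simp add: gs ps qs qs')
  apply (simp only: sum.distrib[symmetric])
  apply (subst (1 2) sum_symmetrise)
  apply (rule sum.cong[OF refl])+
  apply (simp add: gs algebra_simps)
  done

lemma nriem_at_contract:
  fixes g :: "'n::finite arr3"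
  shows "(\<Sum>m\<in>UNIV. nriem_at g p q b c m e m) = nricci_at g p q b c e"
  apply (simp add: nriem_at_def nricci_at_def sum_distrib_left sum.distrib sum_subtractf
      algebra_simps)
  apply (simp only: sum.distrib[symmetric])
  apply (subst (1 2) sum_symmetrise)
  apply (rule sum.cong[OF refl])+
  apply (simp add: algebra_simps)
  done

text \<open>For a (0,2)-tensor with values t b e, partials dt c b e = d_c T_{be} and second
  partials ddt a c b e = d_a d_c T_{be}: first covariant derivative nabla_c T_{be},
  its partial derivative d_a, and the second covariant derivative nabla_a nabla_c T_{be}.\<close>
definition cov1_at :: "'n::finite arr3 \<Rightarrow> 'n arr2 \<Rightarrow> 'n arr3 \<Rightarrow> 'n arr3" where
  "cov1_at g t dt c b e = dt c b e - (\<Sum>k\<in>UNIV. g c b k * t k e) - (\<Sum>k\<in>UNIV. g c e k * t b k)"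

definition dcov1_at :: "'n::finite arr3 \<Rightarrow> 'n arr4 \<Rightarrow> 'n arr2 \<Rightarrow> 'n arr3 \<Rightarrow> 'n arr4
    \<Rightarrow> 'n arr4" where
  "dcov1_at g p t dt ddt a c b e = ddt a c b e
     - (\<Sum>k\<in>UNIV. g c b k * dt a k e + p a c b k * t k e)
     - (\<Sum>k\<in>UNIV. g c e k * dt a b k + p a c e k * t b k)"

definition cov2_at :: "'n::finite arr3 \<Rightarrow> 'n arr4 \<Rightarrow> 'n arr2 \<Rightarrow> 'n arr3 \<Rightarrow> 'n arr4
    \<Rightarrow> 'n arr4" where
  "cov2_at g p t dt ddt a c b e = dcov1_at g p t dt ddt a c b e
     - (\<Sum>k\<in>UNIV. g a c k * cov1_at g t dt k b e)
     - (\<Sum>k\<in>UNIV. g a b k * cov1_at g t dt c k e)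
     - (\<Sum>k\<in>UNIV. g a e k * cov1_at g t dt c b k)"

lemma cov2_at_commutator:
  fixes g :: "'n::finite arr3"
  assumes gs: "\<And>a b c. g a b c = g b a c"
    and ps: "\<And>i a b c. p i a b c = p i b a c"
    and ds: "\<And>a c b e. ddt a c b e = ddt c a b e"
  shows "cov2_at g p t dt ddt a c b e - cov2_at g p t dt ddt c a b e
     = - (\<Sum>m\<in>UNIV. riem_at g p a c b m * t m e + riem_at g p a c e m * t b m)"
  apply (simp add: cov2_at_def dcov1_at_def cov1_at_def riem_at_def sum_distrib_left
      sum_distrib_right sum.distrib sum_subtractf algebra_simps)
  apply (simp add: gs ps ds)
  apply (simp only: sum.distrib[symmetric])
  apply (subst (1 2) sum_symmetrise)
  apply (rule sum.cong[OF refl])+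
  apply (simp add: gs algebra_simps)
  done

section \<open>Curvature of a torsion-free connection in coordinates\<close>

definition gam_at :: "('n::finite \<Rightarrow> 'n \<Rightarrow> 'n \<Rightarrow> real^'n \<Rightarrow> real) \<Rightarrow> real^'n \<Rightarrow> 'n arr3" where
  "gam_at Gam y a b c = Gam a b c y"

definition dgam_at :: "('n::finite \<Rightarrow> 'n \<Rightarrow> 'n \<Rightarrow> real^'n \<Rightarrow> real) \<Rightarrow> real^'n \<Rightarrow> 'n arr4" where
  "dgam_at Gam y i a b c = pd i (Gam a b c) y"

definition ddgam_at :: "('n::finite \<Rightarrow> 'n \<Rightarrow> 'n \<Rightarrow> real^'n \<Rightarrow> real) \<Rightarrow> real^'n \<Rightarrow> 'n arr5" where
  "ddgam_at Gam y i j a b c = pd i (pd j (Gam a b c)) y"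

definition cov1 :: "('n::finite \<Rightarrow> 'n \<Rightarrow> 'n \<Rightarrow> real^'n \<Rightarrow> real) \<Rightarrow> ('n \<Rightarrow> 'n \<Rightarrow> real^'n \<Rightarrow> real)
    \<Rightarrow> 'n \<Rightarrow> 'n \<Rightarrow> 'n \<Rightarrow> real^'n \<Rightarrow> real" where
  "cov1 Gam T c b e y = pd c (T b e) y
     - (\<Sum>k\<in>UNIV. Gam c b k y * T k e y) - (\<Sum>k\<in>UNIV. Gam c e k y * T b k y)"

definition cov2 :: "('n::finite \<Rightarrow> 'n \<Rightarrow> 'n \<Rightarrow> real^'n \<Rightarrow> real) \<Rightarrow> ('n \<Rightarrow> 'n \<Rightarrow> real^'n \<Rightarrow> real)
    \<Rightarrow> 'n \<Rightarrow> 'n \<Rightarrow> 'n \<Rightarrow> 'n \<Rightarrow> real^'n \<Rightarrow> real" where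
  "cov2 Gam T a c b e y = pd a (cov1 Gam T c b e) y
     - (\<Sum>k\<in>UNIV. Gam a c k y * cov1 Gam T k b e y)
     - (\<Sum>k\<in>UNIV. Gam a b k y * cov1 Gam T c k e y)
     - (\<Sum>k\<in>UNIV. Gam a e k y * cov1 Gam T c b k y)"

lemma riemT_3_1: "riemT Gam [b, c, e] [d] = riem Gam b c e d"
  by (rule ext) (simp add: riemT_def)

lemma riem_antisym: "riem Gam a b c d y = - riem Gam b a c d y"
proof -
  have "(\<Sum>k\<in>UNIV. Gam b c k y * Gam a k d y) = (\<Sum>k\<in>UNIV. Gam a k d y * Gam b c k y)"
    and "(\<Sum>k\<in>UNIV. Gam b k d y * Gam a c k y) = (\<Sum>k\<in>UNIV. Gam a c k y * Gam b k d y)"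
    by (simp_all add: mult.commute)
  then show ?thesis unfolding riem_def by linarith
qed

locale torsion_free_connection =
  fixes U :: "(real^'n::finite) set"
    and Gam :: "'n \<Rightarrow> 'n \<Rightarrow> 'n \<Rightarrow> real^'n \<Rightarrow> real"
  assumes open_U: "open U"
    and smooth_Gam: "\<And>a b c. smooth_on U (Gam a b c)"
    and Gam_sym: "\<And>a b c y. y \<in> U \<Longrightarrow> Gam a b c y = Gam b a c y"
begin

lemmas smooth_intros = smooth_on_add[OF open_U] smooth_on_diff[OF open_U]
  smooth_on_mult[OF open_U] smooth_on_sum[OF open_U finite_class.finite_UNIV] smooth_on_pd smooth_Gam

lemmas smooth_differentiable = smooth_on_differentiable[where U = U]

lemma smooth_riem: "smooth_on U (riem Gam a b c d)"
  unfolding riem_def[abs_def] by (intro smooth_intros)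

lemma smooth_ricci: "smooth_on U (ricci Gam a c)"
  unfolding ricci_def[abs_def] by (intro smooth_intros smooth_riem)

lemma smooth_cov1: "(\<And>b e. smooth_on U (T b e)) \<Longrightarrow> smooth_on U (cov1 Gam T c b e)"
  unfolding cov1_def[abs_def] by (intro smooth_intros) auto

lemma gam_at_sym: "y \<in> U \<Longrightarrow> gam_at Gam y a b c = gam_at Gam y b a c"
  by (simp add: gam_at_def Gam_sym)

lemma dgam_at_sym: "y \<in> U \<Longrightarrow> dgam_at Gam y i a b c = dgam_at Gam y i b a c"
  unfolding dgam_at_def by (rule pd_local[OF open_U]) (auto simp: Gam_sym)

lemma ddgam_at_commute: "y \<in> U \<Longrightarrow> ddgam_at Gam y i j a b c = ddgam_at Gam y j i a b c"
  unfolding ddgam_at_def by (rule smooth_on_pd_commute[OF open_U smooth_Gam])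

lemma ddgam_at_sym: "y \<in> U \<Longrightarrow> ddgam_at Gam y i j a b c = ddgam_at Gam y i j b a c"
  unfolding ddgam_at_def by (rule pd_local[OF open_U]) (auto intro: pd_local[OF open_U] simp: Gam_sym)

lemma riem_eq_at: "riem Gam a b c d y = riem_at (gam_at Gam y) (dgam_at Gam y) a b c d"
  by (simp add: riem_def riem_at_def gam_at_def dgam_at_def)

lemma pd_riem_eq_at:
  assumes y: "y \<in> U"
  shows "pd e (riem Gam a b c d) y = driem_at (gam_at Gam y) (dgam_at Gam y) (ddgam_at Gam y) e a b c d"
  unfolding riem_def[abs_def]
  by (subst pd_add pd_diff pd_sum_UNIV pd_mult, (intro smooth_differentiable smooth_intros y)+)+
    (simp add: driem_at_def gam_at_def dgam_at_def ddgam_at_def)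

lemma nabla_riem_eq_at:
  assumes y: "y \<in> U"
  shows "nabla Gam (riemT Gam) [a, b, c, e] [d] y
    = nriem_at (gam_at Gam y) (dgam_at Gam y) (ddgam_at Gam y) a b c e d"
  by (simp add: nabla_def riemT_3_1 numeral_3_eq_3 sum.lessThan_Suc pd_riem_eq_at[OF y])
    (simp add: riemT_def riem_eq_at nriem_at_def gam_at_def algebra_simps)

lemma cov1_ricci_eq_at:
  assumes y: "y \<in> U"
  shows "cov1 Gam (ricci Gam) c b e y = nricci_at (gam_at Gam y) (dgam_at Gam y) (ddgam_at Gam y) c b e"
  unfolding cov1_def nricci_at_def ricci_def[abs_def]
  by (subst pd_sum_UNIV, (intro smooth_differentiable smooth_riem y)+)
    (simp add: pd_riem_eq_at[OF y] riem_eq_at gam_at_def)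

lemma riem_bianchi1:
  assumes y: "y \<in> U"
  shows "riem Gam a b c d y + riem Gam b c a d y + riem Gam c a b d y = 0"
  unfolding riem_eq_at by (rule riem_at_bianchi1) (use gam_at_sym dgam_at_sym y in auto)

lemma divR_eq_cov1_ricci:
  assumes y: "y \<in> U"
  shows "divR Gam [b, c, e] [] y = cov1 Gam (ricci Gam) c b e y - cov1 Gam (ricci Gam) b c e y"
proof -
  let ?g = "gam_at Gam y" and ?p = "dgam_at Gam y" and ?q = "ddgam_at Gam y"
  have bianchi: "nriem_at ?g ?p ?q m b c e m = - nriem_at ?g ?p ?q b c m e m + nriem_at ?g ?p ?q c b m e m" for m
    using nriem_at_bianchi2[of ?g ?p ?q m b c e m] nriem_at_antisym[of ?g ?p ?q c m b e m]
      gam_at_sym[OF y] dgam_at_sym[OF y] ddgam_at_commute[OF y] ddgam_at_sym[OF y] by fastforce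
  have "divR Gam [b, c, e] [] y = (\<Sum>m\<in>UNIV. nriem_at ?g ?p ?q m b c e m)"
    by (simp add: divR_def nabla_riem_eq_at[OF y])
  also have "\<dots> = - (\<Sum>m\<in>UNIV. nriem_at ?g ?p ?q b c m e m) + (\<Sum>m\<in>UNIV. nriem_at ?g ?p ?q c b m e m)"
    by (simp add: bianchi sum.distrib sum_negf sum_subtractf)
  finally show ?thesis by (simp add: nriem_at_contract cov1_ricci_eq_at[OF y])
qed

text \<open>Ricci identity for a smooth (0,2)-tensor field; Schwarz's theorem for T is needed.\<close>
lemma ricci_identity:
  assumes y: "y \<in> U" and T: "\<And>b e. smooth_on U (T b e)"
  shows "cov2 Gam T a c b e y - cov2 Gam T c a b e y
     = - (\<Sum>m\<in>UNIV. riem Gam a c b m y * T m e y + riem Gam a c e m y * T b m y)"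
proof -
  let ?g = "gam_at Gam y" and ?p = "dgam_at Gam y" and ?t = "\<lambda>b e. T b e y"
    and ?dt = "\<lambda>c b e. pd c (T b e) y" and ?ddt = "\<lambda>a c b e. pd a (pd c (T b e)) y"
  have cov1: "cov1 Gam T c b e y = cov1_at ?g ?t ?dt c b e" for c b e
    by (simp add: cov1_def cov1_at_def gam_at_def)
  have pd_cov1: "pd a (cov1 Gam T c b e) y = dcov1_at ?g ?p ?t ?dt ?ddt a c b e" for a c b e
    unfolding cov1_def[abs_def]
    by (subst pd_add pd_diff pd_sum_UNIV pd_mult, (intro smooth_differentiable smooth_intros y T)+)+
      (simp add: dcov1_at_def gam_at_def dgam_at_def)
  have "cov2 Gam T a c b e y = cov2_at ?g ?p ?t ?dt ?ddt a c b e" for a c b e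
    by (simp add: cov2_def cov2_at_def cov1 pd_cov1 gam_at_def)
  then show ?thesis
    unfolding riem_eq_at
    by (simp only:) (rule cov2_at_commutator,
        auto simp: gam_at_sym[OF y] dgam_at_sym[OF y] smooth_on_pd_commute[OF open_U T y])
qed

lemma nabla_divR:
  assumes x: "x \<in> U"
  shows "nabla Gam (divR Gam) [a, b, c, e] [] x
     = cov2 Gam (ricci Gam) a c b e x - cov2 Gam (ricci Gam) a b c e x"
proof -
  have "pd a (divR Gam [b, c, e] []) x
      = pd a (\<lambda>y. cov1 Gam (ricci Gam) c b e y - cov1 Gam (ricci Gam) b c e y) x"
    by (rule pd_local[OF open_U x]) (simp add: divR_eq_cov1_ricci)
  also have "\<dots> = pd a (cov1 Gam (ricci Gam) c b e) x - pd a (cov1 Gam (ricci Gam) b c e) x"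
    by (intro pd_diff smooth_differentiable smooth_cov1 smooth_ricci x)
  finally have pd_divR: "pd a (divR Gam [b, c, e] []) x = \<dots>" .
  show ?thesis
    by (simp add: nabla_def numeral_3_eq_3 sum.lessThan_Suc pd_divR)
      (simp add: divR_eq_cov1_ricci[OF x] cov2_def sum_subtractf right_diff_distrib algebra_simps)
qed

text \<open>The cyclic sum of the commutators [nabla_a, nabla_c] R_{be}: the Ricci identity leaves
  curvature terms, and the first Bianchi identity cancels those contracted with R_{me}.\<close>
lemma cyclic_ricci_commutators:
  assumes y: "y \<in> U"
  shows "(cov2 Gam (ricci Gam) a c b e y - cov2 Gam (ricci Gam) c a b e y)
       + (cov2 Gam (ricci Gam) b a c e y - cov2 Gam (ricci Gam) a b c e y)
       + (cov2 Gam (ricci Gam) c b a e y - cov2 Gam (ricci Gam) b c a e y)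
       = (\<Sum>m\<in>UNIV. ricci Gam a m y * riem Gam b c e m y)
       + (\<Sum>m\<in>UNIV. ricci Gam b m y * riem Gam c a e m y)
       + (\<Sum>m\<in>UNIV. ricci Gam c m y * riem Gam a b e m y)"
proof -
  let ?R = "\<lambda>a b c d. riem Gam a b c d y" and ?Ric = "\<lambda>a b. ricci Gam a b y"
  have cyclic: "?R c b a m = - ?R a c b m - ?R b a c m" for m
    using riem_bianchi1[OF y, of a c b m] by linarith
  have termwise:
    "- (?R a c b m * ?Ric m e + ?R a c e m * ?Ric b m)
     - (?R b a c m * ?Ric m e + ?R b a e m * ?Ric c m)
     - (?R c b a m * ?Ric m e + ?R c b e m * ?Ric a m)
     = ?Ric a m * ?R b c e m + ?Ric b m * ?R c a e m + ?Ric c m * ?R a b e m" for m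
    unfolding cyclic riem_antisym[of Gam a c e m] riem_antisym[of Gam b a e m] riem_antisym[of Gam c b e m]
    by (simp add: algebra_simps)
  have "(\<Sum>m\<in>UNIV. - (?R a c b m * ?Ric m e + ?R a c e m * ?Ric b m)
      - (?R b a c m * ?Ric m e + ?R b a e m * ?Ric c m)
      - (?R c b a m * ?Ric m e + ?R c b e m * ?Ric a m))
    = (\<Sum>m\<in>UNIV. ?Ric a m * ?R b c e m + ?Ric b m * ?R c a e m + ?Ric c m * ?R a b e m)"
    by (rule sum.cong[OF refl termwise])
  then show ?thesis
    by (simp add: ricci_identity[OF y smooth_ricci] sum.distrib sum_subtractf sum_negf)
qed

end

theorem mainTheorem3:
  fixes Gam :: "'n::finite \<Rightarrow> 'n \<Rightarrow> 'n \<Rightarrow> real^'n \<Rightarrow> real"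
    and U :: "(real^'n) set"
  assumes "open U"
    and "\<And>a b c. smooth_on U (Gam a b c)"
    and "\<And>a b c y. y \<in> U \<Longrightarrow> Gam a b c y = Gam b a c y"
    and "x \<in> U"
  shows "nabla Gam (divR Gam) [a, b, c, e] [] x
       + nabla Gam (divR Gam) [b, c, a, e] [] x
       + nabla Gam (divR Gam) [c, a, b, e] [] x
       = (\<Sum>m\<in>UNIV. ricci Gam a m x * riem Gam b c e m x)
       + (\<Sum>m\<in>UNIV. ricci Gam b m x * riem Gam c a e m x)
       + (\<Sum>m\<in>UNIV. ricci Gam c m x * riem Gam a b e m x)"
proof -
  interpret torsion_free_connection U Gam
    using assms(1-3) by unfold_locales
  have "nabla Gam (divR Gam) [a, b, c, e] [] x
       + nabla Gam (divR Gam) [b, c, a, e] [] x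
       + nabla Gam (divR Gam) [c, a, b, e] [] x
      = (cov2 Gam (ricci Gam) a c b e x - cov2 Gam (ricci Gam) c a b e x)
      + (cov2 Gam (ricci Gam) b a c e x - cov2 Gam (ricci Gam) a b c e x)
      + (cov2 Gam (ricci Gam) c b a e x - cov2 Gam (ricci Gam) b c a e x)"
    by (simp add: nabla_divR[OF assms(4)])
  also have "\<dots> = (\<Sum>m\<in>UNIV. ricci Gam a m x * riem Gam b c e m x)
       + (\<Sum>m\<in>UNIV. ricci Gam b m x * riem Gam c a e m x)
       + (\<Sum>m\<in>UNIV. ricci Gam c m x * riem Gam a b e m x)"
    by (rule cyclic_ricci_commutators[OF assms(4)])
  finally show ?thesis .
qed

end
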